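(* Let $\mu>0$ and $\lambda_1>0$, and consider the system $$\frac{dx}{dt}=\lambda_1\bigl(2\mu y-4\mu xy-2x^2-2xy+x\bigr),\qquad \frac{dy}{dt}=\lambda_1\bigl(\mu y-4\mu y^2-2xy-2y^2+y\bigr).$$ Let $Q\subset\mathbb{R}^2$ be the closed quadrangle defined by $y\ge x/2$, $y\ge 1/2-x$, $y\le 1/3$, $y\le 1/2-x/2$. Then the fixed points of this system in $Q$ are given by $$x_c=\frac{2\mu+2}{4\mu+6}=\frac{\mu+1}{2\mu+3},\qquad y_c=\frac{\mu+1}{4\mu+6}.$$
   Context: $Q$ is the domain of convex mosaics in the inverse symbolic plane, with vertices $(1/3,1/6)$, $(1/2,1/4)$, $(1/3,1/3)$, $(1/6,1/3)$. *)

theory Defs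
  imports Complex_Main
begin

definition Q :: "(real \<times> real) set" where
  "Q = {(x, y). y \<ge> x / 2 \<and> y \<ge> 1/2 - x \<and> y \<le> 1/3 \<and> y \<le> 1/2 - x / 2}"

definition vf :: "real \<Rightarrow> real \<Rightarrow> real \<times> real \<Rightarrow> real \<times> real" where
  "vf \<mu> lam1 p = (case p of (x, y) \<Rightarrow>
     (lam1 * (2*\<mu>*y - 4*\<mu>*x*y - 2*x^2 - 2*x*y + x),
      lam1 * (\<mu>*y - 4*\<mu>*y^2 - 2*x*y - 2*y^2 + y)))"

end

theory Submission
  imports Defs
begin

text \<open>With \<open>h = 1 - 2x - 2y - 4\<mu>y\<close> the two components of the field are \<open>\<lambda>\<^sub>1 y (h + \<mu>)\<close>
  and, after subtracting twice the second from the first, \<open>\<lambda>\<^sub>1 (x - 2y) h\<close>. Since \<open>\<mu> \<noteq> 0\<close>,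
  \<open>h + \<mu>\<close> and \<open>h\<close> cannot vanish together, so a fixed point off the axis \<open>y = 0\<close> lies on the
  line \<open>x = 2y\<close> (an edge of Q) and has \<open>h = -\<mu>\<close>, which determines \<open>y\<close>. Every point of Q has
  \<open>y \<ge> 1/6\<close>, and the resulting point lies in Q precisely because \<open>\<mu> \<ge> 0\<close>.\<close>

lemma vf_factorization:
  "vf \<mu> lam1 (x, y) =
     (lam1 * ((x - 2*y) * (1 - 2*x - 2*y - 4*\<mu>*y) + 2 * (y * (1 + \<mu> - 2*x - 2*y - 4*\<mu>*y))),
      lam1 * (y * (1 + \<mu> - 2*x - 2*y - 4*\<mu>*y)))"
  by (simp add: vf_def algebra_simps power2_eq_square)

lemma vf_eq_zero_off_axis_iff:
  fixes \<mu> lam1 x y :: real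
  assumes "\<mu> \<noteq> 0" and "lam1 \<noteq> 0" and "y \<noteq> 0"
  shows "vf \<mu> lam1 (x, y) = (0, 0) \<longleftrightarrow> x = 2*y \<and> (4*\<mu> + 6) * y = \<mu> + 1"
proof -
  define h where "h = 1 - 2*x - 2*y - 4*\<mu>*y"
  have "vf \<mu> lam1 (x, y) = (0, 0) \<longleftrightarrow> (x - 2*y) * h + 2 * (y * (h + \<mu>)) = 0 \<and> y * (h + \<mu>) = 0"
  proof -
    have "vf \<mu> lam1 (x, y) = (lam1 * ((x - 2*y) * h + 2 * (y * (h + \<mu>))), lam1 * (y * (h + \<mu>)))"
      by (simp add: vf_factorization h_def algebra_simps)
    then show ?thesis
      using \<open>lam1 \<noteq> 0\<close> by simp
  qed
  also have "\<dots> \<longleftrightarrow> (x - 2*y) * h = 0 \<and> h + \<mu> = 0"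
    using \<open>y \<noteq> 0\<close> by auto
  also have "\<dots> \<longleftrightarrow> x = 2*y \<and> h + \<mu> = 0"
    using \<open>\<mu> \<noteq> 0\<close> by auto
  also have "\<dots> \<longleftrightarrow> x = 2*y \<and> (4*\<mu> + 6) * y = \<mu> + 1"
    by (auto simp: h_def algebra_simps)
  finally show ?thesis .
qed

lemma Q_snd_ge: "(x, y) \<in> Q \<Longrightarrow> y \<ge> 1/6"
  by (simp add: Q_def)

lemma diagonal_in_Q_iff: "(2*y, y) \<in> Q \<longleftrightarrow> 1/6 \<le> y \<and> y \<le> 1/4"
  by (auto simp: Q_def)

theorem lemma5:
  fixes \<mu> lam1 :: real
  assumes "\<mu> > 0" and "lam1 > 0"
  shows "{p \<in> Q. vf \<mu> lam1 p = (0, 0)} =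
         {((2*\<mu> + 2) / (4*\<mu> + 6), (\<mu> + 1) / (4*\<mu> + 6))}"
proof -
  define y\<^sub>c where "y\<^sub>c = (\<mu> + 1) / (4*\<mu> + 6)"
  have x\<^sub>c: "(2*\<mu> + 2) / (4*\<mu> + 6) = 2 * y\<^sub>c"
    by (simp add: y\<^sub>c_def field_simps)
  have y\<^sub>c_iff: "(4*\<mu> + 6) * y = \<mu> + 1 \<longleftrightarrow> y = y\<^sub>c" for y
    using assms by (auto simp: y\<^sub>c_def field_simps)
  have zeros_in_Q: "(x, y) \<in> Q \<Longrightarrow> vf \<mu> lam1 (x, y) = (0, 0) \<longleftrightarrow> (x, y) = (2 * y\<^sub>c, y\<^sub>c)"
    for x y
    using assms Q_snd_ge[of x y] vf_eq_zero_off_axis_iff[of \<mu> lam1 y x] y\<^sub>c_iff[of y]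
    by auto
  have "1/6 \<le> y\<^sub>c" "y\<^sub>c \<le> 1/4"
    using assms by (simp_all add: y\<^sub>c_def field_simps)
  then have "(2 * y\<^sub>c, y\<^sub>c) \<in> Q"
    by (simp add: diagonal_in_Q_iff)
  then show ?thesis
    unfolding x\<^sub>c y\<^sub>c_def[symmetric] using zeros_in_Q by auto
qed

end
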